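(* Let $B\ge 2$ and $G\ge 2$ be even integers. If $\min(B,G)\le 4$, then there is no balanced matrix $X\in\{-1,1\}^{G\times B}$ without collisions. If $B=G=6$ or $B=G=8$, then there exists a balanced matrix $X\in\{-1,1\}^{G\times B}$ without collisions.
   Context: Two vectors $v_1,v_2\in\{-1,1\}^k$ have a collision if $v_1=v_2$ or $v_1=-v_2$. A matrix $X\in\{-1,1\}^{n\times p}$ has no collisions if no two distinct rows of $X$ have a collision and no two distinct columns of $X$ have a collision. A matrix $X\in\{-1,1\}^{n\times p}$ is balanced if each of its rows sums to $0$ and each of its columns sums to $0$. *)

theory Defs
  imports Main
begin

text \<open>A matrix X in {-1,1}^(n x p) is represented as a function nat => nat => int,
  with rows indexed by 0..<n and columns by 0..<p; values outside are irrelevant.\<close>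

definition pm1_matrix :: "nat \<Rightarrow> nat \<Rightarrow> (nat \<Rightarrow> nat \<Rightarrow> int) \<Rightarrow> bool" where
  "pm1_matrix n p X \<longleftrightarrow> (\<forall>i<n. \<forall>j<p. X i j = 1 \<or> X i j = -1)"

definition collision :: "nat \<Rightarrow> (nat \<Rightarrow> int) \<Rightarrow> (nat \<Rightarrow> int) \<Rightarrow> bool" where
  "collision k v1 v2 \<longleftrightarrow> (\<forall>t<k. v1 t = v2 t) \<or> (\<forall>t<k. v1 t = - v2 t)"

definition no_collisions :: "nat \<Rightarrow> nat \<Rightarrow> (nat \<Rightarrow> nat \<Rightarrow> int) \<Rightarrow> bool" where
  "no_collisions n p X \<longleftrightarrow>
     (\<forall>i<n. \<forall>i'<n. i \<noteq> i' \<longrightarrow> \<not> collision p (\<lambda>j. X i j) (\<lambda>j. X i' j)) \<and>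
     (\<forall>j<p. \<forall>j'<p. j \<noteq> j' \<longrightarrow> \<not> collision n (\<lambda>i. X i j) (\<lambda>i. X i j'))"

definition balanced :: "nat \<Rightarrow> nat \<Rightarrow> (nat \<Rightarrow> nat \<Rightarrow> int) \<Rightarrow> bool" where
  "balanced n p X \<longleftrightarrow>
     (\<forall>i<n. (\<Sum>j<p. X i j) = 0) \<and> (\<forall>j<p. (\<Sum>i<n. X i j) = 0)"

end

theory Submission
  imports Defs
begin

text \<open>A balanced row of length 2 is \<open>(a, -a)\<close>, so any two such rows collide. A balanced row
  \<open>u\<close> of length 4 contains two entries of each sign, so up to the sign of \<open>u\<close> it is determined
  by which of \<open>u 1, u 2, u 3\<close> equals \<open>u 0\<close>; hence at most three rows of length 4 can be pairwise
  collision-free. Thus a balanced collision-free matrix with \<open>p \<in> {2, 4}\<close> columns has fewer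
  than \<open>p\<close> rows. If the smaller side is at most 4, transposing if necessary it is the number
  of columns, so the number of rows is even and below 4, i.e. 2, and transposing once more
  gives a contradiction.\<close>

lemma balanced_pm1_length2_collision:
  fixes u v :: "nat \<Rightarrow> int"
  assumes "\<forall>t<2. u t = 1 \<or> u t = -1" "\<forall>t<2. v t = 1 \<or> v t = -1"
    and "(\<Sum>t<2. u t) = 0" "(\<Sum>t<2. v t) = 0"
  shows "collision 2 u v"
proof -
  have "u 0 = 1 \<or> u 0 = -1" "v 0 = 1 \<or> v 0 = -1" "u 1 = - u 0" "v 1 = - v 0"
    using assms by (auto simp: numeral_eq_Suc)
  then show ?thesis
    unfolding collision_def by (auto simp: numeral_eq_Suc less_Suc_eq)
qed

definition pattern4 :: "(nat \<Rightarrow> int) \<Rightarrow> int \<times> int" where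
  "pattern4 u = (u 0 * u 1, u 0 * u 2)"

lemma pattern4_balanced_pm1:
  fixes u :: "nat \<Rightarrow> int"
  assumes "\<forall>t<4. u t = 1 \<or> u t = -1" and "(\<Sum>t<4. u t) = 0"
  shows "pattern4 u \<in> {(1, -1), (-1, 1), (-1, -1)}"
proof -
  have "u 0 = 1 \<or> u 0 = -1" "u 1 = 1 \<or> u 1 = -1" "u 2 = 1 \<or> u 2 = -1" "u 3 = 1 \<or> u 3 = -1"
    "u 0 + u 1 + u 2 + u 3 = 0"
    using assms by (auto simp: numeral_eq_Suc)
  then show ?thesis
    unfolding pattern4_def by (elim disjE; simp)
qed

lemma balanced_pm1_length4_same_pattern_collision:
  fixes u v :: "nat \<Rightarrow> int"
  assumes "\<forall>t<4. u t = 1 \<or> u t = -1" "\<forall>t<4. v t = 1 \<or> v t = -1"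
    and "(\<Sum>t<4. u t) = 0" "(\<Sum>t<4. v t) = 0"
    and "pattern4 u = pattern4 v"
  shows "collision 4 u v"
proof -
  have "u 0 = 1 \<or> u 0 = -1" "u 1 = 1 \<or> u 1 = -1" "u 2 = 1 \<or> u 2 = -1" "u 3 = 1 \<or> u 3 = -1"
    "v 0 = 1 \<or> v 0 = -1" "v 1 = 1 \<or> v 1 = -1" "v 2 = 1 \<or> v 2 = -1" "v 3 = 1 \<or> v 3 = -1"
    "u 0 + u 1 + u 2 + u 3 = 0" "v 0 + v 1 + v 2 + v 3 = 0"
    "u 0 * u 1 = v 0 * v 1" "u 0 * u 2 = v 0 * v 2"
    using assms by (auto simp: numeral_eq_Suc pattern4_def)
  then have "(\<forall>t\<in>{0, 1, 2, 3}. u t = v t) \<or> (\<forall>t\<in>{0, 1, 2, 3}. u t = - v t)"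
    by (elim disjE; simp)
  moreover have "{..<4} = {0, 1, 2, 3 :: nat}"
    by auto
  ultimately show ?thesis
    unfolding collision_def by (metis lessThan_iff)
qed

lemma balanced_no_collisions_rows_less_cols:
  assumes pm: "pm1_matrix n p X" and bal: "balanced n p X" and nc: "no_collisions n p X"
    and p: "p = 2 \<or> p = 4"
  shows "n < p"
proof (rule ccontr)
  assume "\<not> n < p"
  then have rows: "i < n" if "i < p" for i
    using that by simp
  have row_pm1: "\<forall>t<p. X i t = 1 \<or> X i t = -1" and row_sum: "(\<Sum>t<p. X i t) = 0" if "i < p" for i
    using pm bal rows[OF that] unfolding pm1_matrix_def balanced_def by auto
  have row_distinct: "\<not> collision p (\<lambda>j. X i j) (\<lambda>j. X i' j)"
    if "i < p" "i' < p" "i \<noteq> i'" for i i'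
    using nc rows that unfolding no_collisions_def by blast
  from p show False
  proof
    assume "p = 2"
    then show False
      using balanced_pm1_length2_collision row_pm1 row_sum row_distinct[of 0 1] by simp
  next
    assume p4: "p = 4"
    let ?pat = "\<lambda>i. pattern4 (\<lambda>j. X i j)"
    have pat_range: "?pat i \<in> {(1, -1), (-1, 1), (-1, -1)}" if "i < 4" for i
      by (rule pattern4_balanced_pm1) (use row_pm1 row_sum p4 that in auto)
    have "?pat ` {..<4} \<subseteq> {(1, -1), (-1, 1), (-1, -1)}"
      by (intro image_subsetI pat_range) simp
    then have "card (?pat ` {..<4}) \<le> card {(1 :: int, -1 :: int), (-1, 1), (-1, -1)}"
      by (rule card_mono[rotated]) simp
    then have "\<not> inj_on ?pat {..<4}"
      by (intro pigeonhole) simp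
    then obtain i i' where i: "i < 4" "i' < 4" "i \<noteq> i'" and "?pat i = ?pat i'"
      unfolding inj_on_def by auto
    then have "collision 4 (\<lambda>j. X i j) (\<lambda>j. X i' j)"
      by (intro balanced_pm1_length4_same_pattern_collision) (use row_pm1 row_sum p4 in auto)
    with row_distinct i p4 show False
      by simp
  qed
qed

lemma pm1_balanced_no_collisions_transpose:
  assumes "pm1_matrix n p X" "balanced n p X" "no_collisions n p X"
  shows "pm1_matrix p n (\<lambda>i j. X j i)" "balanced p n (\<lambda>i j. X j i)"
    "no_collisions p n (\<lambda>i j. X j i)"
  using assms unfolding pm1_matrix_def balanced_def no_collisions_def by auto

text \<open>Turns the bounded quantifiers of the definitions into list traversals that \<open>code_simp\<close>
  can evaluate.\<close>

lemma all_less_iff_list_all: "(\<forall>i<(n::nat). P i) \<longleftrightarrow> list_all P [0..<n]"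
  by (auto simp: list_all_iff)

definition M6 :: "int list list" where
  "M6 = [[ 1,  1,  1, -1, -1, -1],
         [-1,  1, -1,  1,  1, -1],
         [ 1,  1, -1, -1, -1,  1],
         [-1, -1,  1, -1,  1,  1],
         [-1, -1,  1,  1, -1,  1],
         [ 1, -1, -1,  1,  1, -1]]"

definition M8 :: "int list list" where
  "M8 = [[ 1,  1, -1,  1, -1,  1, -1, -1],
         [-1,  1,  1, -1, -1, -1,  1,  1],
         [ 1,  1,  1, -1, -1, -1,  1, -1],
         [-1, -1,  1,  1, -1,  1,  1, -1],
         [ 1, -1, -1, -1,  1, -1,  1,  1],
         [-1, -1,  1,  1,  1,  1, -1, -1],
         [-1,  1, -1, -1,  1,  1, -1,  1],
         [ 1, -1, -1,  1,  1, -1, -1,  1]]"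

lemma M6_balanced_no_collisions:
  "pm1_matrix 6 6 (\<lambda>i j. M6 ! i ! j) \<and> balanced 6 6 (\<lambda>i j. M6 ! i ! j)
     \<and> no_collisions 6 6 (\<lambda>i j. M6 ! i ! j)"
  unfolding pm1_matrix_def balanced_def no_collisions_def collision_def M6_def
  unfolding all_less_iff_list_all lessThan_atLeast0 atLeastLessThan_upt
  by code_simp

lemma M8_balanced_no_collisions:
  "pm1_matrix 8 8 (\<lambda>i j. M8 ! i ! j) \<and> balanced 8 8 (\<lambda>i j. M8 ! i ! j)
     \<and> no_collisions 8 8 (\<lambda>i j. M8 ! i ! j)"
  unfolding pm1_matrix_def balanced_def no_collisions_def collision_def M8_def
  unfolding all_less_iff_list_all lessThan_atLeast0 atLeastLessThan_upt
  by code_simp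

theorem theorem2:
  fixes B G :: nat
  assumes "B \<ge> 2" and "G \<ge> 2" and "even B" and "even G"
  shows "(min B G \<le> 4 \<longrightarrow>
            \<not> (\<exists>X. pm1_matrix G B X \<and> balanced G B X \<and> no_collisions G B X)) \<and>
         ((B = 6 \<and> G = 6) \<or> (B = 8 \<and> G = 8) \<longrightarrow>
            (\<exists>X. pm1_matrix G B X \<and> balanced G B X \<and> no_collisions G B X))"
proof (intro conjI impI notI)
  assume "min B G \<le> 4" and "\<exists>X. pm1_matrix G B X \<and> balanced G B X \<and> no_collisions G B X"
  then obtain X where X: "pm1_matrix G B X" "balanced G B X" "no_collisions G B X"
    by blast
  have "G < B" if "B = 2 \<or> B = 4"
    using balanced_no_collisions_rows_less_cols[OF X that] .
  moreover have "B < G" if "G = 2 \<or> G = 4"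
    using balanced_no_collisions_rows_less_cols[OF pm1_balanced_no_collisions_transpose[OF X] that] .
  moreover have "B = 2 \<or> B = 4 \<or> G = 2 \<or> G = 4" "B = 2 \<or> B \<ge> 4" "G = 2 \<or> G \<ge> 4"
    using \<open>min B G \<le> 4\<close> assms by (auto simp: min_def; presburger)+
  ultimately show False
    by linarith
next
  assume "(B = 6 \<and> G = 6) \<or> (B = 8 \<and> G = 8)"
  then show "\<exists>X. pm1_matrix G B X \<and> balanced G B X \<and> no_collisions G B X"
    using M6_balanced_no_collisions M8_balanced_no_collisions by blast
qed

end
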